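(* Let $\Gamma$ be a graph such that $\chi(\overline{\Gamma})=k$. Suppose $F$ is a bipartite graph on $k$ vertices which does not contain $K_{s,r}$ as a subgraph, for some integers $2\le s\le r$ with $r\ne 2$. Then $\Gamma$ has a subgraph $G$ with at least $e(\Gamma)e(F)/\binom{k}{2}$ edges that does not contain $K_{s,r}$ as an induced subgraph.
   Context: $\overline{\Gamma}$ is the complement of $\Gamma$ and $\chi$ denotes chromatic number. *)

theory Defs
  imports Complex_Main
begin

definition graph :: "'a set \<Rightarrow> 'a set set \<Rightarrow> bool" where
  "graph V E \<longleftrightarrow> finite V \<and> (\<forall>e\<in>E. \<exists>u v. e = {u, v} \<and> u \<in> V \<and> v \<in> V \<and> u \<noteq> v)"

definition all_pairs :: "'a set \<Rightarrow> 'a set set" where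
  "all_pairs V = {{u, v} | u v. u \<in> V \<and> v \<in> V \<and> u \<noteq> v}"

definition compl_edges :: "'a set \<Rightarrow> 'a set set \<Rightarrow> 'a set set" where
  "compl_edges V E = all_pairs V - E"

definition proper_colouring :: "'a set \<Rightarrow> 'a set set \<Rightarrow> nat \<Rightarrow> ('a \<Rightarrow> nat) \<Rightarrow> bool" where
  "proper_colouring V E k c \<longleftrightarrow> (\<forall>v\<in>V. c v < k) \<and> (\<forall>u\<in>V. \<forall>v\<in>V. {u, v} \<in> E \<longrightarrow> u \<noteq> v \<longrightarrow> c u \<noteq> c v)"

definition chromatic_number :: "'a set \<Rightarrow> 'a set set \<Rightarrow> nat" where
  "chromatic_number V E = (LEAST k. \<exists>c. proper_colouring V E k c)"

definition bipartite :: "'a set \<Rightarrow> 'a set set \<Rightarrow> bool" where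
  "bipartite V E \<longleftrightarrow> (\<exists>c. proper_colouring V E 2 c)"

definition subgraph :: "'a set \<Rightarrow> 'a set set \<Rightarrow> 'a set \<Rightarrow> 'a set set \<Rightarrow> bool" where
  "subgraph V' E' V E \<longleftrightarrow> V' \<subseteq> V \<and> E' \<subseteq> E \<and> graph V' E'"

definition contains_Ksr :: "nat \<Rightarrow> nat \<Rightarrow> 'a set \<Rightarrow> 'a set set \<Rightarrow> bool" where
  "contains_Ksr s r V E \<longleftrightarrow> (\<exists>S R. S \<subseteq> V \<and> R \<subseteq> V \<and> S \<inter> R = {} \<and> card S = s \<and> card R = r \<and>
      (\<forall>x\<in>S. \<forall>y\<in>R. {x, y} \<in> E))"

definition contains_induced_Ksr :: "nat \<Rightarrow> nat \<Rightarrow> 'a set \<Rightarrow> 'a set set \<Rightarrow> bool" where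
  "contains_induced_Ksr s r V E \<longleftrightarrow> (\<exists>S R. S \<subseteq> V \<and> R \<subseteq> V \<and> S \<inter> R = {} \<and> card S = s \<and> card R = r \<and>
      (\<forall>x\<in>S. \<forall>y\<in>R. {x, y} \<in> E) \<and>
      (\<forall>x\<in>S. \<forall>y\<in>S. {x, y} \<notin> E) \<and> (\<forall>x\<in>R. \<forall>y\<in>R. {x, y} \<notin> E))"

end

theory Submission
  imports Defs "HOL-Combinatorics.Permutations"
begin

(* Colour the complement of \<Gamma> with k colours, so that every colour class is a clique of \<Gamma>,
   and identify the colours with the vertices of F through a uniformly random bijection. Keep an
   edge of \<Gamma> if it lies inside a class or if its two classes correspond to an edge of F. An edge
   between two classes survives with probability e(F)/(k choose 2), so some bijection keeps at
   least e(\<Gamma>)e(F)/(k choose 2) edges. In the resulting graph the two sides of an induced K_{s,r}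
   are independent, hence meet every class at most once; a class meeting both sides would,
   because r \<ge> 3, produce a triangle in the bipartite graph F; so the classes of the two sides
   would span a K_{s,r} in F. *)

lemma permutes_fixing_iff:
  assumes "i \<in> A"
  shows "p permutes A \<and> p i = i \<longleftrightarrow> p permutes (A - {i})"
  using assms permutes_superset[of p A "A - {i}"] permutes_subset[of p "A - {i}" A]
    permutes_not_in[of p "A - {i}" i]
  by blast

lemma card_permutes_with_value:
  assumes "finite A" "i \<in> A" "a \<in> A"
  shows "card {p. p permutes A \<and> p i = a} = fact (card A - 1)"
proof -
  let ?f = "\<lambda>p. transpose a i \<circ> p"
  have "bij_betw ?f {p. p permutes A \<and> p i = a} {q. q permutes A \<and> q i = i}"
    by (rule bij_betw_byWitness[where f' = ?f])
      (use assms in \<open>auto simp: fun_eq_iff intro!: permutes_compose permutes_swap_id\<close>)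
  then have "card {p. p permutes A \<and> p i = a} = card {q. q permutes (A - {i})}"
    using bij_betw_same_card permutes_fixing_iff[OF assms(2)] by force
  also have "\<dots> = fact (card A - 1)"
    using assms by (intro card_permutations) auto
  finally show ?thesis .
qed

lemma card_permutes_with_two_values:
  assumes "finite A" "i \<in> A" "j \<in> A" "a \<in> A" "b \<in> A" "i \<noteq> j" "a \<noteq> b"
  shows "card {p. p permutes A \<and> p i = a \<and> p j = b} = fact (card A - 2)"
proof -
  let ?f = "\<lambda>p. transpose a i \<circ> p"
  let ?b = "transpose a i b"
  have "bij_betw ?f {p. p permutes A \<and> p i = a \<and> p j = b}
      {q. q permutes A \<and> q i = i \<and> q j = ?b}"
    by (rule bij_betw_byWitness[where f' = ?f])
      (use assms in \<open>auto simp: fun_eq_iff transpose_def intro!: permutes_compose permutes_swap_id\<close>)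
  then have "card {p. p permutes A \<and> p i = a \<and> p j = b}
      = card {q. q permutes A \<and> q i = i \<and> q j = ?b}"
    by (rule bij_betw_same_card)
  also have "{q. q permutes A \<and> q i = i \<and> q j = ?b} = {q. q permutes (A - {i}) \<and> q j = ?b}"
    using permutes_fixing_iff[OF assms(2)] by blast
  also have "card \<dots> = fact (card (A - {i}) - 1)"
    using assms by (intro card_permutes_with_value) (auto simp: transpose_def)
  also have "card (A - {i}) - 1 = card A - 2"
    using assms by simp
  finally show ?thesis .
qed

lemma card_permutes_pair_in:
  assumes "finite A" "i \<in> A" "j \<in> A" "i \<noteq> j" "P \<subseteq> {(a, b). a \<in> A \<and> b \<in> A \<and> a \<noteq> b}"
  shows "card {p. p permutes A \<and> (p i, p j) \<in> P} = card P * fact (card A - 2)"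
proof -
  have "finite P"
    using assms(1,5) by (blast intro: finite_subset[of P "A \<times> A"])
  have "{p. p permutes A \<and> (p i, p j) \<in> P}
      = (\<Union>(a, b)\<in>P. {p. p permutes A \<and> p i = a \<and> p j = b})"
    by auto
  also have "card \<dots> = (\<Sum>(a, b)\<in>P. card {p. p permutes A \<and> p i = a \<and> p j = b})"
    using \<open>finite P\<close> finite_permutations[OF assms(1)]
    by (subst card_UN_disjoint) (auto simp: case_prod_beta intro: finite_subset[rotated])
  also have "\<dots> = (\<Sum>(a, b)\<in>P. fact (card A - 2))"
    using assms by (intro sum.cong) (auto intro!: card_permutes_with_two_values)
  finally show ?thesis
    by simp
qed

lemma fact_eq_choose_two:
  assumes "2 \<le> n"
  shows "(fact n :: 'a :: semiring_char_0) = 2 * of_nat (n choose 2) * fact (n - 2)"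
  using arg_cong[OF binomial_fact_lemma[OF assms], of "of_nat :: nat \<Rightarrow> 'a"]
  by (simp add: ac_simps)

lemma graph_edgeE:
  assumes "graph V E" "e \<in> E"
  obtains u v where "e = {u, v}" "u \<in> V" "v \<in> V" "u \<noteq> v"
  using assms unfolding graph_def by blast

lemma graph_doubleton_edgeD:
  assumes "graph V E" "{u, v} \<in> E"
  shows "u \<in> V" "v \<in> V" "u \<noteq> v"
  using assms by (auto elim!: graph_edgeE simp: doubleton_eq_iff)

lemma graph_edges_subset: "graph V E \<Longrightarrow> E \<subseteq> {e. e \<subseteq> V \<and> card e = 2}"
  by (auto elim: graph_edgeE)

lemma finite_graph_edges: "graph V E \<Longrightarrow> finite E"
  by (rule finite_subset[OF graph_edges_subset]) (auto simp: graph_def)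

lemma card_graph_edges_le:
  assumes "graph V E"
  shows "card E \<le> card V choose 2"
proof -
  have "card E \<le> card {e. e \<subseteq> V \<and> card e = 2}"
    using assms graph_edges_subset unfolding graph_def by (intro card_mono) auto
  also have "\<dots> = card V choose 2"
    using assms unfolding graph_def by (intro n_subsets) simp
  finally show ?thesis .
qed

lemma card_graph_arcs:
  assumes "graph V E"
  shows "card {(u, v). {u, v} \<in> E} = 2 * card E"
proof -
  have arcs: "{(u, v). {u, v} \<in> E} = (\<Union>e\<in>E. {(u, v). {u, v} = e})"
    by auto
  have two: "card {(u, v). {u, v} = e} = 2" if "e \<in> E" for e
  proof -
    obtain u v where "e = {u, v}" "u \<noteq> v"
      using assms \<open>e \<in> E\<close> by (rule graph_edgeE)
    then have "{(x, y). {x, y} = e} = {(u, v), (v, u)}"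
      by (auto simp: doubleton_eq_iff)
    then show ?thesis
      using \<open>u \<noteq> v\<close> by simp
  qed
  have "card (\<Union>e\<in>E. {(u, v). {u, v} = e}) = (\<Sum>e\<in>E. card {(u, v). {u, v} = e})"
  proof (rule card_UN_disjoint)
    show "finite E"
      using assms by (rule finite_graph_edges)
    show "\<forall>e\<in>E. finite {(u, v). {u, v} = e}"
      using two by (metis card.infinite zero_neq_numeral)
  qed auto
  then show ?thesis
    using two arcs by simp
qed

lemma bipartite_no_triangle:
  assumes "graph V E" "bipartite V E" "{a, b} \<in> E" "{b, d} \<in> E" "{a, d} \<in> E"
  shows False
proof -
  obtain col where "proper_colouring V E 2 col"
    using assms(2) unfolding bipartite_def by blast
  then have "col a \<noteq> col b" "col b \<noteq> col d" "col a \<noteq> col d" "col a < 2" "col b < 2" "col d < 2"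
    using assms graph_doubleton_edgeD[OF assms(1)] unfolding proper_colouring_def by meson+
  then show False
    by linarith
qed

lemma proper_colouring_chromatic_number:
  assumes "finite V"
  shows "\<exists>c. proper_colouring V E (chromatic_number V E) c"
proof -
  obtain f where "bij_betw f V {0..<card V}"
    using ex_bij_betw_finite_nat[OF assms] by blast
  then have "proper_colouring V E (card V) f"
    unfolding proper_colouring_def bij_betw_def inj_on_def by auto
  then have "\<exists>k c. proper_colouring V E k c"
    by blast
  then show ?thesis
    unfolding chromatic_number_def by (rule LeastI_ex)
qed

lemma proper_colouring_compl_edges_clique:
  assumes "proper_colouring V (compl_edges V E) k c" "x \<in> V" "y \<in> V" "x \<noteq> y" "c x = c y"
  shows "{x, y} \<in> E"
  using assms unfolding proper_colouring_def compl_edges_def all_pairs_def by blast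

(* The pullback of F, with a loop added at every vertex, along \<phi>. *)
definition pullback_edges :: "'a set set \<Rightarrow> ('a \<Rightarrow> 'b) \<Rightarrow> 'b set set \<Rightarrow> 'a set set" where
  "pullback_edges E \<phi> EF = {e \<in> E. \<phi> ` e \<in> EF \<or> (\<exists>x. \<phi> ` e = {x})}"

lemma doubleton_in_pullback_edges_iff [simp]:
  "{u, v} \<in> pullback_edges E \<phi> EF \<longleftrightarrow> {u, v} \<in> E \<and> (\<phi> u = \<phi> v \<or> {\<phi> u, \<phi> v} \<in> EF)"
  unfolding pullback_edges_def by (auto simp: doubleton_eq_iff)

lemma not_contains_induced_Ksr_pullback_edges:
  assumes F: "graph VF EF" "bipartite VF EF" "\<not> contains_Ksr s r VF EF"
    and "2 \<le> s" "3 \<le> r"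
    and \<phi>: "\<phi> ` V \<subseteq> VF"
    and fibre_clique: "\<And>x y. x \<in> V \<Longrightarrow> y \<in> V \<Longrightarrow> x \<noteq> y \<Longrightarrow> \<phi> x = \<phi> y \<Longrightarrow> {x, y} \<in> E"
  shows "\<not> contains_induced_Ksr s r V (pullback_edges E \<phi> EF)"
proof
  let ?G = "pullback_edges E \<phi> EF"
  assume "contains_induced_Ksr s r V ?G"
  then obtain S R where SR: "S \<subseteq> V" "R \<subseteq> V" "card S = s" "card R = r"
    and cross: "\<forall>x\<in>S. \<forall>y\<in>R. {x, y} \<in> ?G"
    and indep_S: "\<forall>x\<in>S. \<forall>y\<in>S. {x, y} \<notin> ?G"
    and indep_R: "\<forall>x\<in>R. \<forall>y\<in>R. {x, y} \<notin> ?G"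
    unfolding contains_induced_Ksr_def by (elim exE conjE) (rule that)
  have inj_indep: "inj_on \<phi> T" if "T \<subseteq> V" "\<forall>x\<in>T. \<forall>y\<in>T. {x, y} \<notin> ?G" for T
  proof (rule inj_onI, rule ccontr)
    fix x y
    assume "x \<in> T" "y \<in> T" "\<phi> x = \<phi> y" "x \<noteq> y"
    with that fibre_clique[of x y] have "{x, y} \<in> ?G"
      by auto
    with that \<open>x \<in> T\<close> \<open>y \<in> T\<close> show False
      by blast
  qed
  have inj_S: "inj_on \<phi> S" and inj_R: "inj_on \<phi> R"
    using inj_indep SR(1,2) indep_S indep_R by blast+
  have cross_image: "\<phi> x \<noteq> \<phi> y \<and> {\<phi> x, \<phi> y} \<in> EF" if "x \<in> S" "y \<in> R" for x y
  proof (rule ccontr)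
    assume "\<not> ?thesis"
    with cross[rule_format, OF that] have same: "\<phi> x = \<phi> y"
      by auto
    have "finite S" "finite R"
      using SR(3,4) \<open>2 \<le> s\<close> \<open>3 \<le> r\<close> by (simp_all add: card_ge_0_finite)
    have "card (S - {x}) = s - 1"
      using SR(3) \<open>x \<in> S\<close> \<open>finite S\<close> by simp
    then have "S - {x} \<noteq> {}"
      using \<open>2 \<le> s\<close> by (intro notI) simp
    then obtain x' where x': "x' \<in> S" "x' \<noteq> x"
      by blast
    have "card (\<phi> ` (R - {y})) = r - 1"
      using SR(4) \<open>y \<in> R\<close> \<open>finite R\<close> by (simp add: card_image inj_on_diff[OF inj_R])
    then have "\<not> \<phi> ` (R - {y}) \<subseteq> {\<phi> x'}"
      using card_mono[of "{\<phi> x'}" "\<phi> ` (R - {y})"] \<open>3 \<le> r\<close> by (auto simp del: card_image)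
    then obtain y' where y': "y' \<in> R" "y' \<noteq> y" "\<phi> y' \<noteq> \<phi> x'"
      by blast
    have "\<phi> x' \<noteq> \<phi> x" "\<phi> y' \<noteq> \<phi> y"
      using inj_S inj_R x' y' that unfolding inj_on_def by blast+
    then have "{\<phi> x', \<phi> x} \<in> EF" "{\<phi> x, \<phi> y'} \<in> EF" "{\<phi> x', \<phi> y'} \<in> EF"
      using cross[rule_format, OF x'(1) \<open>y \<in> R\<close>] cross[rule_format, OF \<open>x \<in> S\<close> y'(1)]
        cross[rule_format, OF x'(1) y'(1)] y'(3) same
      by simp_all
    then show False
      by (rule bipartite_no_triangle[OF F(1,2)])
  qed
  have "contains_Ksr s r VF EF"
    unfolding contains_Ksr_def
  proof (intro exI conjI)
    show "\<phi> ` S \<subseteq> VF" "\<phi> ` R \<subseteq> VF"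
      using SR \<phi> by auto
    show "\<phi> ` S \<inter> \<phi> ` R = {}"
      using cross_image by fastforce
    show "card (\<phi> ` S) = s" "card (\<phi> ` R) = r"
      using SR inj_S inj_R by (simp_all add: card_image)
    show "\<forall>a\<in>\<phi> ` S. \<forall>b\<in>\<phi> ` R. {a, b} \<in> EF"
      using cross_image by blast
  qed
  then show False
    using F(3) by blast
qed

lemma card_permutes_keeping_edge:
  assumes "graph V E" "graph VF EF" "\<psi> ` V \<subseteq> VF" "e \<in> E"
  shows "fact (card VF) * real (card EF) / real (card VF choose 2)
           \<le> real (card {p. p permutes VF \<and> e \<in> pullback_edges E (p \<circ> \<psi>) EF})"
proof -
  let ?k = "card VF" and ?keep = "{p. p permutes VF \<and> e \<in> pullback_edges E (p \<circ> \<psi>) EF}"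
  obtain u v where e: "e = {u, v}" "u \<in> V" "v \<in> V"
    using assms(1,4) by (rule graph_edgeE)
  define a b where "a = \<psi> u" and "b = \<psi> v"
  have ab: "a \<in> VF" "b \<in> VF"
    using assms(3) e unfolding a_def b_def by auto
  have "finite VF"
    using assms(2) unfolding graph_def by simp
  have keep_iff: "e \<in> pullback_edges E (p \<circ> \<psi>) EF \<longleftrightarrow> p a = p b \<or> {p a, p b} \<in> EF" for p
    using assms(4) e unfolding a_def b_def by simp
  show ?thesis
  proof (cases "a = b")
    case True
    then have "?keep = {p. p permutes VF}"
      using keep_iff by auto
    then have "real (card ?keep) = fact ?k"
      using card_permutations[OF refl \<open>finite VF\<close>] by simp
    moreover have "real (card EF) / real (?k choose 2) \<le> 1"
      using card_graph_edges_le[OF assms(2)]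
      by (cases "?k choose 2 = 0") (simp_all add: divide_le_eq_1)
    ultimately show ?thesis
      using mult_left_le[of "real (card EF) / real (?k choose 2)" "fact ?k"] by simp
  next
    case False
    have "?keep = {p. p permutes VF \<and> (p a, p b) \<in> {(x, y). {x, y} \<in> EF}}"
      using keep_iff False by (auto dest: permutes_inj simp: inj_def)
    also have "card \<dots> = card {(x, y). {x, y} \<in> EF} * fact (?k - 2)"
      using graph_doubleton_edgeD[OF assms(2)]
      by (intro card_permutes_pair_in[OF \<open>finite VF\<close> ab False]) (auto, metis insert_absorb2)
    also have "\<dots> = 2 * card EF * fact (?k - 2)"
      using card_graph_arcs[OF assms(2)] by simp
    finally have "real (card ?keep) = 2 * real (card EF) * fact (?k - 2)"
      by simp
    moreover have "2 \<le> ?k"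
      using card_mono[OF \<open>finite VF\<close>, of "{a, b}"] ab False by simp
    ultimately show ?thesis
      by (simp add: fact_eq_choose_two[of ?k])
  qed
qed

lemma ex_permutes_many_pullback_edges:
  assumes "graph V E" "graph VF EF" "\<psi> ` V \<subseteq> VF"
  shows "\<exists>p. p permutes VF \<and>
           real (card E) * real (card EF) / real (card VF choose 2)
             \<le> real (card (pullback_edges E (p \<circ> \<psi>) EF))"
proof (rule ccontr)
  let ?perms = "{p. p permutes VF}" and ?G = "\<lambda>p. pullback_edges E (p \<circ> \<psi>) EF"
  assume "\<not> ?thesis"
  have "finite VF" "finite E"
    using assms(1,2) finite_graph_edges unfolding graph_def by auto
  from \<open>\<not> ?thesis\<close> have "(\<Sum>p\<in>?perms. real (card (?G p)))
               < real (card ?perms) * (real (card E) * real (card EF) / real (card VF choose 2))"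
    using \<open>finite VF\<close>
    by (intro sum_bounded_above_strict) (auto simp: card_gt_0_iff finite_permutations intro: permutes_id)
  also have "\<dots> = (\<Sum>e\<in>E. fact (card VF) * real (card EF) / real (card VF choose 2))"
    using card_permutations[OF refl \<open>finite VF\<close>] by simp
  also have "\<dots> \<le> (\<Sum>e\<in>E. real (card {p \<in> ?perms. e \<in> ?G p}))"
    using card_permutes_keeping_edge[OF assms] by (intro sum_mono) simp
  also have "\<dots> = (\<Sum>p\<in>?perms. real (card {e \<in> E. e \<in> ?G p}))"
    using sum_multicount_gen[OF finite_permutations[OF \<open>finite VF\<close>] \<open>finite E\<close>,
        where R = "\<lambda>p e. e \<in> ?G p" and k = "\<lambda>e. card {p \<in> ?perms. e \<in> ?G p}"]
    by (simp flip: of_nat_sum)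
  also have "\<dots> = (\<Sum>p\<in>?perms. real (card (?G p)))"
    unfolding pullback_edges_def by (simp add: Collect_conj_eq Int_absorb1)
  finally show False
    by simp
qed

theorem lemma2p1:
  fixes V :: "'a set" and E :: "'a set set"
    and VF :: "'b set" and EF :: "'b set set"
    and k s r :: nat
  assumes "graph V E"
    and "chromatic_number V (compl_edges V E) = k"
    and "graph VF EF" and "bipartite VF EF" and "card VF = k"
    and "\<not> contains_Ksr s r VF EF"
    and "2 \<le> s" and "s \<le> r" and "r \<noteq> 2"
  shows "\<exists>V' E'. subgraph V' E' V E \<and>
           real (card E') \<ge> real (card E) * real (card EF) / real (k choose 2) \<and>
           \<not> contains_induced_Ksr s r V' E'"
proof -
  obtain c where c: "proper_colouring V (compl_edges V E) k c"
    using proper_colouring_chromatic_number[of V "compl_edges V E"] assms(1,2)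
    unfolding graph_def by auto
  obtain g where g: "bij_betw g {..<k} VF"
    using ex_bij_betw_nat_finite[of VF] assms(3,5) unfolding graph_def by (auto simp: atLeast0LessThan)
  have "(g \<circ> c) ` V \<subseteq> VF"
    using c g unfolding proper_colouring_def bij_betw_def by auto
  with assms(1,3,5) obtain p where p: "p permutes VF"
    and many: "real (card E) * real (card EF) / real (k choose 2)
                 \<le> real (card (pullback_edges E (p \<circ> (g \<circ> c)) EF))"
    using ex_permutes_many_pullback_edges by blast
  let ?\<phi> = "p \<circ> (g \<circ> c)"
  have image: "?\<phi> ` V \<subseteq> VF"
    using \<open>(g \<circ> c) ` V \<subseteq> VF\<close> permutes_image[OF p] by (auto simp flip: image_comp)
  have fibre_clique: "{x, y} \<in> E" if "x \<in> V" "y \<in> V" "x \<noteq> y" "?\<phi> x = ?\<phi> y" for x y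
  proof -
    have "c x < k" "c y < k"
      using c that unfolding proper_colouring_def by auto
    with that(4) g have "c x = c y"
      using permutes_inj[OF p] unfolding bij_betw_def inj_on_def inj_def by auto
    then show ?thesis
      using c that(1-3) by (rule proper_colouring_compl_edges_clique[rotated -1])
  qed
  have "3 \<le> r"
    using assms(7-9) by linarith
  have "\<not> contains_induced_Ksr s r V (pullback_edges E ?\<phi> EF)"
    by (rule not_contains_induced_Ksr_pullback_edges[OF assms(3,4,6,7) \<open>3 \<le> r\<close> image fibre_clique])
  moreover have "subgraph V (pullback_edges E ?\<phi> EF) V E"
    using assms(1) unfolding subgraph_def graph_def pullback_edges_def by auto
  ultimately show ?thesis
    using many by blast
qed
end
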